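(* Let $n\ge1$ and $\varepsilon_1,\dots,\varepsilon_n\in\{-1,1\}$ with at least one $\varepsilon_i=-1$. Put $a=n-\max\{i:\varepsilon_i=-1\}$. Then $\mathcal S(\varepsilon_1,\dots,\varepsilon_n,1)=(-1)^a\binom{n-1}{a}\,2^{\otimes n}$ in $V^{\otimes n}$.
   Context: Let $V=\mathbb Q^\times\otimes_{\mathbb Z}\mathbb Q$ (torsion, in particular $-1$, becomes $0$); for $f\in\mathbb Q^\times$ write $f$ for its image in $V$. Tensors in $V^{\otimes n}$ are multilinear in the multiplicative sense, and any formal tensor having the number $0$ as a factor is interpreted as $0$. $2^{\otimes n}=2\otimes\cdots\otimes2$. Define $\mu(x,y)=1-y/x$ if $x\ne0$, $\mu(0,y)=y$. For a tuple $(a_1,\dots,a_m)$, $m\ge2$ (the decorated polygon $P(a_1,\dots,a_m)$ with root decoration $a_m$, attached to $G(a_{m-1},\dots,a_1;a_m)$), define $\mathcal S(a_1,\dots,a_m)\in V^{\otimes(m-1)}$ by $\mathcal S(a_1,a_2)=\mu(a_1,a_2)$ and, for $m\ge3$, $\mathcal S(a_1,\dots,a_m)=\sum_{i=1}^{m-1}\mathcal S(a_1,\dots,\widehat{a_i},\dots,a_m)\otimes\mu(a_i,a_{i+1})-\sum_{i=2}^{m-1}\mathcal S(a_1,\dots,\widehat{a_i},\dots,a_m)\otimes\mu(a_i,a_{i-1})$. *)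

theory Defs
  imports "HOL-Computational_Algebra.Computational_Algebra"
begin

text \<open>Model of V = Q^x (x) Q: since Q^x / torsion is free abelian on the primes,
  V is the Q-vector space with basis the primes; the image of a nonzero rational f
  is its vector of p-adic valuations (p ranging over primes; non-primes give 0).
  V^{(x) k} is modelled as functions on index lists (p_1,...,p_k) of length k
  (coordinates w.r.t. the tensor basis); values on lists of other lengths are 0.\<close>

type_synonym tens = "nat list \<Rightarrow> rat"

definition pval :: "nat \<Rightarrow> rat \<Rightarrow> int" where
  "pval p x = (if prime p \<and> x \<noteq> 0 then
      (let (a, b) = quotient_of x in
        int (multiplicity (int p) a) - int (multiplicity (int p) b)) else 0)"

text \<open>image of f in V; the number 0 is sent to the zero vector (convention of the paper).\<close>
definition vecV :: "rat \<Rightarrow> nat \<Rightarrow> rat" where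
  "vecV f = (\<lambda>p. of_int (pval p f))"

definition tappend :: "tens \<Rightarrow> rat \<Rightarrow> tens" where
  "tappend T x = (\<lambda>ps. if ps = [] then 0 else T (butlast ps) * vecV x (last ps))"

definition ptensor :: "rat list \<Rightarrow> tens" where
  "ptensor fs = (\<lambda>ps. if length ps = length fs
                      then (\<Prod>i<length fs. vecV (fs ! i) (ps ! i)) else 0)"

definition tscale :: "rat \<Rightarrow> tens \<Rightarrow> tens" where
  "tscale c T = (\<lambda>ps. c * T ps)"

definition mu :: "rat \<Rightarrow> rat \<Rightarrow> rat" where
  "mu x y = (if x \<noteq> 0 then 1 - y / x else y)"

definition remove_at :: "nat \<Rightarrow> 'a list \<Rightarrow> 'a list" where
  "remove_at i xs = take i xs @ drop (Suc i) xs"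

lemma length_remove_at[simp]: "i < length xs \<Longrightarrow> length (remove_at i xs) = length xs - 1"
  by (simp add: remove_at_def)

text \<open>S(a_1,...,a_m) with 0-based list indexing; defined as 0 for m < 2 (irrelevant).\<close>
function S :: "rat list \<Rightarrow> tens" where
  "S as = (if length as < 2 then (\<lambda>_. 0)
           else if length as = 2 then ptensor [mu (as ! 0) (as ! 1)]
           else (\<lambda>ps. (\<Sum>i\<in>{0..<length as - 1}.
                        tappend (S (remove_at i as)) (mu (as ! i) (as ! Suc i)) ps)
                   - (\<Sum>i\<in>{1..<length as - 1}.
                        tappend (S (remove_at i as)) (mu (as ! i) (as ! (i - 1))) ps)))"
  by pat_completeness auto
termination
  by (relation "measure length") auto

end

theory Submission
  imports Defs
begin

text \<open>For a list b of m signs, mu(b_i, b_(i+1)) is 0 or 2 according as the neighbours agree or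
  not, so by induction S(b) is a rational multiple F(b) of 2^(m-1) (tensor power), where
  F(b) = sum_i (d_i - d_(i-1)) F(b without b_i) and d_i = [b_i ~= b_(i+1)]. If the final constant
  run of b has length r, then F(b) = (-1)^(r-1) binom(m-2, r-1): deleting an entry before the run
  keeps r (or has coefficient 0), and there the coefficients telescope to 1; inside the run only
  its first entry contributes, with coefficient -1 and run length r-1; Pascal's rule combines the
  two. For b = (eps, 1) the run has length n + 1 - max{i : eps_i = -1}.\<close>

declare S.simps [simp del]

lemma nth_remove_at: "k < length xs - 1 \<Longrightarrow> remove_at i xs ! k = xs ! (if k < i then k else Suc k)"
  by (auto simp: remove_at_def nth_append min_def)

lemma last_remove_at: "i < length xs - 1 \<Longrightarrow> last (remove_at i xs) = last xs"
  by (simp add: remove_at_def)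

lemma set_remove_at_subset: "set (remove_at i xs) \<subseteq> set xs"
  unfolding remove_at_def by (auto dest: in_set_takeD in_set_dropD)

definition trailing_run :: "'a list \<Rightarrow> nat" where
  "trailing_run xs = length (takeWhile (\<lambda>x. x = last xs) (rev xs))"

lemma trailing_run_le_length: "trailing_run xs \<le> length xs"
  unfolding trailing_run_def by (metis length_rev length_takeWhile_le)

lemma trailing_run_pos: "xs \<noteq> [] \<Longrightarrow> 0 < trailing_run xs"
  by (cases xs rule: rev_cases) (simp_all add: trailing_run_def)

lemma nth_trailing_run:
  assumes "length xs - trailing_run xs \<le> k" "k < length xs"
  shows "xs ! k = last xs"
proof -
  let ?i = "length xs - Suc k"
  have "?i < trailing_run xs" using assms by linarith
  then have "takeWhile (\<lambda>x. x = last xs) (rev xs) ! ?i = last xs"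
    unfolding trailing_run_def by (meson nth_mem set_takeWhileD)
  then show ?thesis
    using \<open>?i < trailing_run xs\<close> assms(2)
    by (simp add: trailing_run_def takeWhile_nth rev_nth Suc_diff_Suc)
qed

lemma nth_before_trailing_run:
  assumes "trailing_run xs < length xs"
  shows "xs ! (length xs - Suc (trailing_run xs)) \<noteq> last xs"
  using nth_length_takeWhile[of "\<lambda>x. x = last xs" "rev xs"] assms
  by (simp add: trailing_run_def rev_nth)

lemma trailing_run_eqI:
  assumes "r \<le> length xs"
    and "\<And>k. length xs - r \<le> k \<Longrightarrow> k < length xs \<Longrightarrow> xs ! k = last xs"
    and "r < length xs \<Longrightarrow> xs ! (length xs - Suc r) \<noteq> last xs"
  shows "trailing_run xs = r"
proof (rule linorder_cases)
  assume "trailing_run xs < r"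
  then show ?thesis
    using nth_before_trailing_run[of xs] assms(1,2) by simp
next
  assume "r < trailing_run xs"
  moreover have "r < length xs"
    using \<open>r < trailing_run xs\<close> trailing_run_le_length[of xs] by linarith
  ultimately show ?thesis
    using nth_trailing_run[of xs "length xs - Suc r"] assms(3) by linarith
qed

lemma trailing_run_remove_at_le:
  assumes j: "trailing_run xs = length xs - Suc j" "Suc j < length xs"
    and "i \<le> j" and "i = j \<Longrightarrow> 0 < j \<Longrightarrow> xs ! (j - 1) = xs ! j"
  shows "trailing_run (remove_at i xs) = trailing_run xs"
proof (rule trailing_run_eqI)
  assume "trailing_run xs < length (remove_at i xs)"
  then have "0 < j" "length (remove_at i xs) - Suc (trailing_run xs) = j - 1"
    using assms by auto
  moreover have "xs ! j \<noteq> last xs"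
    using nth_before_trailing_run[of xs] j by simp
  moreover have "last (remove_at i xs) = last xs"
    using assms by (intro last_remove_at) auto
  ultimately show "remove_at i xs ! (length (remove_at i xs) - Suc (trailing_run xs))
      \<noteq> last (remove_at i xs)"
    using assms by (auto simp: nth_remove_at)
qed (use assms nth_trailing_run[of xs] in \<open>auto simp: nth_remove_at last_remove_at\<close>)

lemma trailing_run_remove_at_gt:
  assumes j: "trailing_run xs = length xs - Suc j" and "j < i" "i < length xs - 1"
  shows "trailing_run (remove_at i xs) = trailing_run xs - 1"
proof (rule trailing_run_eqI)
  have "length (remove_at i xs) - Suc (trailing_run xs - 1) = j"
    using assms by auto
  moreover have "xs ! j \<noteq> last xs"
    using nth_before_trailing_run[of xs] assms by simp
  ultimately show "remove_at i xs ! (length (remove_at i xs) - Suc (trailing_run xs - 1))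
      \<noteq> last (remove_at i xs)"
    using assms by (simp add: nth_remove_at last_remove_at)
qed (use assms nth_trailing_run[of xs] in \<open>auto simp: nth_remove_at last_remove_at\<close>)

definition jump :: "'a list \<Rightarrow> nat \<Rightarrow> rat" where
  "jump xs i = (if xs ! i = xs ! Suc i then 0 else 1)"

definition jump_diff :: "'a list \<Rightarrow> nat \<Rightarrow> rat" where
  "jump_diff xs i = jump xs i - (if i = 0 then 0 else jump xs (i - 1))"

text \<open>On a constant list the trailing run is the whole list and the binomial coefficient vanishes.\<close>
definition S_coeff :: "'a list \<Rightarrow> rat" where
  "S_coeff xs = (-1) ^ (trailing_run xs - 1) * of_nat ((length xs - 2) choose (trailing_run xs - 1))"

lemma sum_jump_diff_telescope: "(\<Sum>i<Suc j. jump_diff xs i) = jump xs j"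
  by (induction j) (simp_all add: jump_diff_def)

lemma sum_jump_diff:
  "(\<Sum>i<n. jump xs i * f i) - (\<Sum>i=1..<n. jump xs (i - 1) * f i) = (\<Sum>i<n. jump_diff xs i * f i)"
  by (induction n) (auto simp: jump_diff_def atLeastLessThanSuc algebra_simps)

lemma jump_before_trailing_run:
  assumes "trailing_run xs = length xs - Suc j" "Suc j < length xs"
  shows "jump xs j = 1"
  using nth_before_trailing_run[of xs] nth_trailing_run[of xs "Suc j"] assms
  by (auto simp: jump_def)

lemma sum_jump_diff_S_coeff_before_run:
  assumes j: "trailing_run xs = length xs - Suc j" "Suc j < length xs"
  shows "(\<Sum>i<Suc j. jump_diff xs i * S_coeff (remove_at i xs))
    = (-1) ^ (trailing_run xs - 1) * of_nat ((length xs - 3) choose (trailing_run xs - 1))"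
    (is "_ = ?K")
proof -
  have "jump_diff xs i * S_coeff (remove_at i xs) = jump_diff xs i * ?K" if "i \<le> j" for i
  proof (cases "i = j \<and> 0 < j \<and> xs ! (j - 1) \<noteq> xs ! j")
    case True
    then have "jump_diff xs i = 0"
      using jump_before_trailing_run[OF j] by (simp add: jump_diff_def jump_def)
    then show ?thesis by simp
  next
    case False
    then have "trailing_run (remove_at i xs) = trailing_run xs"
      using trailing_run_remove_at_le[OF j that] by blast
    moreover have "length (remove_at i xs) - 2 = length xs - 3"
      using that j by simp
    ultimately show ?thesis by (simp add: S_coeff_def)
  qed
  then have "(\<Sum>i<Suc j. jump_diff xs i * S_coeff (remove_at i xs)) = (\<Sum>i<Suc j. jump_diff xs i) * ?K"
    unfolding sum_distrib_right by (intro sum.cong) auto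
  then show ?thesis
    using sum_jump_diff_telescope[of xs j] jump_before_trailing_run[OF j] by simp
qed

lemma sum_jump_diff_S_coeff_in_run:
  assumes j: "trailing_run xs = length xs - Suc j"
  shows "(\<Sum>i=Suc j..<length xs - 1. jump_diff xs i * S_coeff (remove_at i xs))
    = (if 2 \<le> trailing_run xs
       then (-1) ^ (trailing_run xs - 1) * of_nat ((length xs - 3) choose (trailing_run xs - 2)) else 0)"
proof -
  have tail: "xs ! k = last xs" if "j < k" "k < length xs" for k
    using that j nth_trailing_run[of xs k] by simp
  have "jump_diff xs i * S_coeff (remove_at i xs) = (if i = Suc j then
      (-1) ^ (trailing_run xs - 1) * of_nat ((length xs - 3) choose (trailing_run xs - 2)) else 0)"
    if "Suc j \<le> i" "i < length xs - 1" for i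
  proof (cases "i = Suc j")
    case True
    have "2 \<le> trailing_run xs"
      using True that j by linarith
    then obtain s where t: "trailing_run xs = Suc (Suc s)"
      by (metis add_2_eq_Suc le_add_diff_inverse)
    have "trailing_run (remove_at i xs) = Suc s"
      using trailing_run_remove_at_gt[OF j _ that(2)] True t by simp
    moreover have "length (remove_at i xs) - 2 = length xs - 3"
      using that by simp
    moreover have "jump_diff xs i = -1"
      using True that j tail[of i] tail[of "Suc i"] jump_before_trailing_run[of xs j]
      by (simp add: jump_diff_def jump_def)
    ultimately show ?thesis
      using True that by (simp add: S_coeff_def t)
  next
    case False
    then show ?thesis
      using that tail[of "i - 1"] tail[of i] tail[of "Suc i"] by (simp add: jump_diff_def jump_def)
  qed
  then show ?thesis
    using j by simp linarith
qed

lemma S_coeff_recurrence: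
  assumes "3 \<le> length xs"
  shows "S_coeff xs = (\<Sum>i<length xs - 1. jump_diff xs i * S_coeff (remove_at i xs))"
proof (cases "trailing_run xs = length xs")
  case True
  then have "jump_diff xs i = 0" if "i < length xs - 1" for i
    using that nth_trailing_run[of xs] by (simp add: jump_diff_def jump_def)
  then show ?thesis
    using True assms by (simp add: S_coeff_def)
next
  case False
  let ?t = "trailing_run xs" and ?m = "length xs"
  define j where "j = ?m - Suc ?t"
  have j: "?t = ?m - Suc j" "Suc j < ?m"
    using False assms trailing_run_pos[of xs] trailing_run_le_length[of xs]
    unfolding j_def by fastforce+
  have "S_coeff xs = (-1) ^ (?t - 1) * of_nat ((?m - 3) choose (?t - 1))
      + (if 2 \<le> ?t then (-1) ^ (?t - 1) * of_nat ((?m - 3) choose (?t - 2)) else 0)"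
  proof -
    obtain s where "?t = Suc s" using j by (metis Suc_diff_Suc)
    moreover have "?m - 2 = Suc (?m - 3)" using assms by simp
    ultimately show ?thesis by (cases s) (simp_all add: S_coeff_def distrib_left)
  qed
  have "(\<Sum>i<?m - 1. jump_diff xs i * S_coeff (remove_at i xs))
      = (\<Sum>i<Suc j. jump_diff xs i * S_coeff (remove_at i xs))
        + (\<Sum>i=Suc j..<?m - 1. jump_diff xs i * S_coeff (remove_at i xs))"
    unfolding atLeast0LessThan[symmetric]
    by (rule sum.atLeastLessThan_concat[symmetric]) (use j in auto)
  also have "\<dots> = S_coeff xs"
    unfolding sum_jump_diff_S_coeff_before_run[OF j] sum_jump_diff_S_coeff_in_run[OF j(1)]
    by (rule sym) fact
  finally show ?thesis ..
qed

lemma vecV_zero [simp]: "vecV 0 p = 0"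
  by (simp add: vecV_def pval_def)

lemma tappend_ptensor: "tappend (ptensor fs) x = ptensor (fs @ [x])"
proof
  fix ps :: "nat list"
  show "tappend (ptensor fs) x ps = ptensor (fs @ [x]) ps"
  proof (cases ps rule: rev_cases)
    case (snoc qs p)
    have "(\<Prod>i<length fs. vecV ((fs @ [x]) ! i) ((qs @ [p]) ! i))
        = (\<Prod>i<length fs. vecV (fs ! i) (qs ! i))" if "length qs = length fs"
      using that by (intro prod.cong) (auto simp: nth_append)
    then show ?thesis
      by (simp add: snoc tappend_def ptensor_def nth_append)
  qed (simp add: tappend_def ptensor_def)
qed

definition two_tpow :: "nat \<Rightarrow> tens" where
  "two_tpow k = ptensor (replicate k 2)"

lemma mu_pm_one: "x \<in> {-1, 1} \<Longrightarrow> y \<in> {-1, 1} \<Longrightarrow> mu x y = (if x = y then 0 else 2)"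
  by (auto simp: mu_def)

lemma tappend_tscale: "tappend (tscale c T) x = tscale c (tappend T x)"
  by (auto simp: tappend_def tscale_def)

lemma tappend_two_tpow: "tappend (two_tpow k) 2 = two_tpow (Suc k)"
  by (simp add: two_tpow_def tappend_ptensor replicate_append_same[symmetric])

lemma tappend_tscale_two_tpow_mu:
  assumes "x \<in> {-1, 1}" "y \<in> {-1, 1}"
  shows "tappend (tscale c (two_tpow k)) (mu x y)
    = tscale (c * (if x = y then 0 else 1)) (two_tpow (Suc k))"
proof (cases "x = y")
  case True
  then show ?thesis
    using assms by (auto simp: mu_pm_one tappend_def tscale_def)
next
  case False
  then show ?thesis
    using assms by (simp add: mu_pm_one tappend_tscale tappend_two_tpow)
qed

lemma S_eq_tscale_two_tpow_step:
  assumes pm: "set xs \<subseteq> {-1, 1}" and m: "3 \<le> length xs"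
    and IH: "\<And>i. i < length xs - 1 \<Longrightarrow> S (remove_at i xs) = tscale (f i) (two_tpow (length xs - 2))"
  shows "S xs = tscale (\<Sum>i<length xs - 1. jump_diff xs i * f i) (two_tpow (length xs - 1))"
proof
  fix ps
  let ?m = "length xs"
  have sign: "xs ! i \<in> {-1, 1}" if "i < ?m" for i
    using pm that by (meson nth_mem subsetD)
  have right: "tappend (S (remove_at i xs)) (mu (xs ! i) (xs ! Suc i))
      = tscale (f i * jump xs i) (two_tpow (?m - 1))" if "i < ?m - 1" for i
    using that IH[OF that] tappend_tscale_two_tpow_mu[OF sign sign] m
    by (simp add: jump_def Suc_diff_Suc numeral_2_eq_2)
  have left: "tappend (S (remove_at i xs)) (mu (xs ! i) (xs ! (i - 1)))
      = tscale (f i * jump xs (i - 1)) (two_tpow (?m - 1))" if "1 \<le> i" "i < ?m - 1" for i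
    using that IH[OF that(2)] tappend_tscale_two_tpow_mu[OF sign sign] m
    by (auto simp: jump_def Suc_diff_Suc numeral_2_eq_2)
  have "S xs ps = (\<Sum>i=0..<?m - 1. tappend (S (remove_at i xs)) (mu (xs ! i) (xs ! Suc i)) ps)
      - (\<Sum>i=1..<?m - 1. tappend (S (remove_at i xs)) (mu (xs ! i) (xs ! (i - 1))) ps)"
    using m by (subst S.simps) simp
  also have "\<dots> = (\<Sum>i<?m - 1. jump xs i * f i * two_tpow (?m - 1) ps)
      - (\<Sum>i=1..<?m - 1. jump xs (i - 1) * f i * two_tpow (?m - 1) ps)"
    using right left by (simp add: tscale_def atLeast0LessThan mult_ac)
  also have "\<dots> = ((\<Sum>i<?m - 1. jump xs i * f i) - (\<Sum>i=1..<?m - 1. jump xs (i - 1) * f i))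
      * two_tpow (?m - 1) ps"
    by (simp only: sum_distrib_right left_diff_distrib)
  also have "\<dots> = tscale (\<Sum>i<?m - 1. jump_diff xs i * f i) (two_tpow (?m - 1)) ps"
    unfolding sum_jump_diff tscale_def ..
  finally show "S xs ps = tscale (\<Sum>i<?m - 1. jump_diff xs i * f i) (two_tpow (?m - 1)) ps" .
qed

lemma S_eq_tscale_two_tpow:
  assumes "set xs \<subseteq> {-1, 1}" "2 \<le> length xs"
  shows "S xs = tscale (S_coeff xs) (two_tpow (length xs - 1))"
  using assms
proof (induction xs rule: measure_induct_rule[where f = length])
  case (less xs)
  show ?case
  proof (cases "length xs = 2")
    case True
    then obtain x y where xs: "xs = [x, y]"
      by (auto simp: length_Suc_conv numeral_2_eq_2)
    have "S xs = tappend (tscale 1 (two_tpow 0)) (mu x y)"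
      by (simp add: xs S.simps tappend_ptensor two_tpow_def tscale_def)
    also have "\<dots> = tscale (S_coeff xs) (two_tpow (length xs - 1))"
      using less.prems
      by (simp add: xs tappend_tscale_two_tpow_mu S_coeff_def trailing_run_def)
    finally show ?thesis .
  next
    case False
    then have "3 \<le> length xs" using less.prems by simp
    have "S (remove_at i xs) = tscale (S_coeff (remove_at i xs)) (two_tpow (length xs - 2))"
      if "i < length xs - 1" for i
      using less.IH[of "remove_at i xs"] less.prems set_remove_at_subset[of i xs] that
        \<open>3 \<le> length xs\<close>
      by (simp add: numeral_2_eq_2)
    then show ?thesis
      using S_eq_tscale_two_tpow_step[OF less.prems(1) \<open>3 \<le> length xs\<close>]
        S_coeff_recurrence[OF \<open>3 \<le> length xs\<close>]
      by simp
  qed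
qed

theorem mainTheorem5:
  fixes eps :: "rat list" and n :: nat
  assumes "n \<ge> 1" and "length eps = n"
    and "set eps \<subseteq> {-1, 1}" and "-1 \<in> set eps"
  defines "a \<equiv> n - Max {i \<in> {1..n}. eps ! (i - 1) = -1}"
  shows "S (eps @ [1]) = tscale ((-1) ^ a * of_nat ((n - 1) choose a)) (ptensor (replicate n 2))"
proof -
  define A where "A = {i \<in> {1..n}. eps ! (i - 1) = -1}"
  define M where "M = Max A"
  have "finite A" by (simp add: A_def)
  obtain k where "k < n" "eps ! k = -1"
    using assms(2,4) by (metis in_set_conv_nth)
  then have "Suc k \<in> A" by (simp add: A_def)
  then have "A \<noteq> {}" by blast
  then have M: "1 \<le> M" "M \<le> n" "eps ! (M - 1) = -1"
    using Max_in[OF \<open>finite A\<close>] unfolding M_def A_def by auto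
  have after_M: "eps ! k = 1" if "M \<le> k" "k < n" for k
  proof -
    have "Suc k \<notin> A"
      using Max_ge[OF \<open>finite A\<close>, of "Suc k"] that unfolding M_def by auto
    moreover have "eps ! k \<in> {-1, 1}"
      using assms(2,3) that by (meson nth_mem subsetD)
    ultimately show ?thesis using that by (auto simp: A_def)
  qed
  have "trailing_run (eps @ [1]) = Suc n - M"
    by (rule trailing_run_eqI) (use assms(2) M after_M in \<open>auto simp: nth_append\<close>)
  then have "S_coeff (eps @ [1]) = (-1) ^ a * of_nat ((n - 1) choose a)"
    using assms(2) M unfolding S_coeff_def a_def A_def[symmetric] M_def[symmetric] by simp
  then show ?thesis
    using S_eq_tscale_two_tpow[of "eps @ [1]"] assms(1-3) by (simp add: two_tpow_def)
qed

end
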